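(* Let $T=(V,E,\gamma,\mathrm{p})$ and $T'=(V',E',\gamma',\mathrm{p}')$ be partially controllable fault trees, where $V$ and $V'$ need not be disjoint but $E,\gamma,\mathrm{p}$ and the children relation coincide with $E',\gamma',\mathrm{p}'$ and the children relation of $T'$ on $V\cap V'$. Let $v\in\mathrm{CBE}(T)\setminus V'$ and assume $\mathrm{BE}(T)\cap\mathrm{BE}(T')=\varnothing$. Let $T''=T[v\mapsto T']$ be the quasimodular composition. Then $\mathrm{CBE}(T'')=(\mathrm{CBE}(T)\setminus\{v\})\cup\mathrm{CBE}(T')$, and as elements of $\mathcal A(\mathrm{CBE}(T''))$, \[\langle U(T'')\rangle=\langle U(T)\rangle[\mathsf F_v\mapsto\langle U(T')\rangle].\]
   Context: A partially controllable fault tree (PCFT) is a tuple $T=(V,E,\gamma,\mathrm{p})$ where $(V,E)$ is a rooted directed acyclic graph (edges point from a node to its children; root $R_T$), $\gamma\colon V\to\{\mathtt{OR},\mathtt{AND},\mathtt{BE},\mathtt{CBE}\}$ with $\gamma(v)\in\{\mathtt{BE},\mathtt{CBE}\}$ iff $v$ is a leaf, and $\mathrm{p}\colon\mathrm{BE}(T)\to[0,1]$, where $\mathrm{BE}(T)=\{v\mid\gamma(v)=\mathtt{BE}\}$ and $\mathrm{CBE}(T)=\{v\mid\gamma(v)=\mathtt{CBE}\}$. The structure function $S_T(v,\vec f,\vec c)$ for $\vec f\in\{0,1\}^{\mathrm{BE}(T)}$, $\vec c\in\{0,1\}^{\mathrm{CBE}(T)}$ is $f_v$ if $\gamma(v)=\mathtt{BE}$,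 $c_v$ if $\gamma(v)=\mathtt{CBE}$, the disjunction of $S_T(w,\vec f,\vec c)$ over children $w$ if $\gamma(v)=\mathtt{OR}$, and the conjunction if $\gamma(v)=\mathtt{AND}$. With $\vec F$ a random vector with independent coordinates, $\mathbb P(F_v=1)=\mathrm{p}(v)$, the unreliability is the function $U(T)\colon\{0,1\}^{\mathrm{CBE}(T)}\to[0,1]$, $U(T)(\vec c)=\mathbb P(S_T(R_T,\vec F,\vec c)=1)$. Quasimodular composition $T[v\mapsto T']$: the PCFT obtained from $T$ by replacing the node $v$ by the whole PCFT $T'$, i.e. removing $v$, adding the nodes and edges of $T'$ (shared nodes identified), and redirecting every edge of $T$ that pointed to $v$ to point to $R_{T'}$ instead; labels and probabilities are inherited. Squarefree polynomial algebra: for a finite set $X$, $\mathcal A(X)$ is the real algebra of formal sums $\alpha=\sum_{Y\subseteq X}\alpha_Y\prod_{x\in Y}\mathsf F_x$ with polynomial addition and multiplication subject to $\mathsf F_x^2=\mathsf F_x$, i.e. $(\alpha+\beta)_Y=\alpha_Y+\beta_Y$, $(\alpha\beta)_Y=\sum_{Y'\cup Y''=Y}\alpha_{Y'}\beta_{Y''}$; elements of $\mathcal A(X)$ are regarded as elements of $\mathcal A(X')$ for $X\subseteq X'$. For $x\in X\setminus Y$, $\alpha\in\mathcal A(X)$, $\beta\in\mathcal A(Y)$, the substitution $\alpha[\mathsf F_x\mapsto\beta]\in\mathcal A((X\setminus\{x\})\cup Y)$ is $\beta\cdot\sum_{Z\ni x}\alpha_Z\prod_{x'\in Z\setminus\{x\}}\mathsf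 F_{x'}+\sum_{Z\not\ni x}\alpha_Z\prod_{x'\in Z}\mathsf F_{x'}$. For any function $g\colon\{0,1\}^X\to\mathbb R$ there is a unique $\langle g\rangle\in\mathcal A(X)$ with $g(\vec c)=\langle g\rangle[\forall x\in X\colon\mathsf F_x\mapsto c_x]$ for all $\vec c$; in particular $\langle U(T)\rangle\in\mathcal A(\mathrm{CBE}(T))$. *)

theory Defs
  imports Complex_Main
begin

datatype gate = GOr | GAnd | GBE | GCBE

text \<open>A PCFT T = (V, E, gamma, p) with its root R_T recorded explicitly.
  Edges point from a node to its children. The probability function is total on the
  node type but only its values on BE(T) are meaningful.\<close>
record 'a pcft =
  nodes :: "'a set"
  edges :: "('a \<times> 'a) set"
  lab   :: "'a \<Rightarrow> gate"
  prob  :: "'a \<Rightarrow> real"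
  root  :: "'a"

definition is_pcft :: "'a pcft \<Rightarrow> bool" where
  "is_pcft T \<longleftrightarrow>
     finite (nodes T) \<and>
     edges T \<subseteq> nodes T \<times> nodes T \<and>
     acyclic (edges T) \<and>
     root T \<in> nodes T \<and>
     (\<forall>u\<in>nodes T. (root T, u) \<in> (edges T)\<^sup>*) \<and>
     (\<forall>u\<in>nodes T. (lab T u \<in> {GBE, GCBE}) \<longleftrightarrow> (\<forall>w. (u, w) \<notin> edges T)) \<and>
     (\<forall>u\<in>nodes T. lab T u = GBE \<longrightarrow> 0 \<le> prob T u \<and> prob T u \<le> 1)"

definition BE :: "'a pcft \<Rightarrow> 'a set" where
  "BE T = {u \<in> nodes T. lab T u = GBE}"

definition CBE :: "'a pcft \<Rightarrow> 'a set" where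
  "CBE T = {u \<in> nodes T. lab T u = GCBE}"

text \<open>Structure function, computed by recursion with fuel; since the graph is a finite
  DAG, fuel card V suffices to reach every leaf below any node.\<close>
fun sf_fuel :: "'a pcft \<Rightarrow> nat \<Rightarrow> ('a \<Rightarrow> bool) \<Rightarrow> ('a \<Rightarrow> bool) \<Rightarrow> 'a \<Rightarrow> bool" where
  "sf_fuel T 0 f c u = False"
| "sf_fuel T (Suc n) f c u =
     (case lab T u of
        GBE \<Rightarrow> f u
      | GCBE \<Rightarrow> c u
      | GOr \<Rightarrow> (\<exists>w. (u, w) \<in> edges T \<and> sf_fuel T n f c w)
      | GAnd \<Rightarrow> (\<forall>w. (u, w) \<in> edges T \<longrightarrow> sf_fuel T n f c w))"

definition S :: "'a pcft \<Rightarrow> 'a \<Rightarrow> ('a \<Rightarrow> bool) \<Rightarrow> ('a \<Rightarrow> bool) \<Rightarrow> bool" where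
  "S T u f c = sf_fuel T (card (nodes T)) f c u"

text \<open>Unreliability: probability that the root fails, the F_b being independent
  Bernoulli(p b) variables; written as the finite sum over the set A of failed BEs.\<close>
definition U :: "'a pcft \<Rightarrow> ('a \<Rightarrow> bool) \<Rightarrow> real" where
  "U T c = (\<Sum>A\<in>Pow (BE T).
      (\<Prod>b\<in>A. prob T b) * (\<Prod>b\<in>BE T - A. 1 - prob T b) *
      (if S T (root T) (\<lambda>b. b \<in> A) c then 1 else 0))"

definition compose :: "'a pcft \<Rightarrow> 'a \<Rightarrow> 'a pcft \<Rightarrow> 'a pcft" where
  "compose T v T' =
     \<lparr> nodes = (nodes T - {v}) \<union> nodes T',
       edges = {(a, if b = v then root T' else b) | a b. (a, b) \<in> edges T} \<union> edges T',
       lab = (\<lambda>u. if u \<in> nodes T' then lab T' u else lab T u),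
       prob = (\<lambda>u. if u \<in> nodes T' then prob T' u else prob T u),
       root = (if root T = v then root T' else root T) \<rparr>"

text \<open>An element of A(X) is represented by its coefficient function Y \<mapsto> alpha_Y,
  which vanishes outside Pow X (so A(X) \<subseteq> A(X') for X \<subseteq> X').\<close>
type_synonym 'a sqpoly = "'a set \<Rightarrow> real"

definition in_alg :: "'a set \<Rightarrow> 'a sqpoly \<Rightarrow> bool" where
  "in_alg X \<alpha> \<longleftrightarrow> (\<forall>Y. \<alpha> Y \<noteq> 0 \<longrightarrow> Y \<subseteq> X)"

definition sq_add :: "'a sqpoly \<Rightarrow> 'a sqpoly \<Rightarrow> 'a sqpoly" where
  "sq_add \<alpha> \<beta> = (\<lambda>Y. \<alpha> Y + \<beta> Y)"

definition sq_mult :: "'a sqpoly \<Rightarrow> 'a sqpoly \<Rightarrow> 'a sqpoly" where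
  "sq_mult \<alpha> \<beta> = (\<lambda>Y. \<Sum>(Y1, Y2)\<in>{(Y1, Y2). Y1 \<subseteq> Y \<and> Y2 \<subseteq> Y \<and> Y1 \<union> Y2 = Y}.
                       \<alpha> Y1 * \<beta> Y2)"

definition sq_subst :: "'a sqpoly \<Rightarrow> 'a \<Rightarrow> 'a sqpoly \<Rightarrow> 'a sqpoly" where
  "sq_subst \<alpha> x \<beta> =
     sq_add (sq_mult \<beta> (\<lambda>W. if x \<notin> W then \<alpha> (insert x W) else 0))
            (\<lambda>W. if x \<notin> W then \<alpha> W else 0)"

definition sq_eval :: "'a set \<Rightarrow> 'a sqpoly \<Rightarrow> ('a \<Rightarrow> bool) \<Rightarrow> real" where
  "sq_eval X \<alpha> c = (\<Sum>Y\<in>Pow X. \<alpha> Y * (\<Prod>x\<in>Y. if c x then 1 else 0))"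

definition rep :: "'a set \<Rightarrow> (('a \<Rightarrow> bool) \<Rightarrow> real) \<Rightarrow> 'a sqpoly" where
  "rep X g = (THE \<alpha>. in_alg X \<alpha> \<and> (\<forall>c. g c = sq_eval X \<alpha> c))"

end

theory Submission
  imports Defs
begin

(* The composed tree fails exactly when T fails with the controlled event v set to the
   failure of the root of T'. Since T and T' share no basic events, the failure of the root
   of T' is independent of the basic events of T, and conditioning on it gives
     U(T'')(c) = U(T')(c) U(T)(c[v:=1]) + (1 - U(T')(c)) U(T)(c[v:=0]).
   The polynomial <U(T)>[F_v := <U(T')>] evaluates to the same function, because <U(T)> is
   affine in F_v; as squarefree representatives are unique, the two polynomials agree. *)

section \<open>Squarefree polynomials\<close>

lemma sq_eval_eq_sum:
  assumes "finite X"
  shows "sq_eval X \<alpha> c = (\<Sum>Y\<in>Pow {x\<in>X. c x}. \<alpha> Y)"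
proof -
  have "sq_eval X \<alpha> c = (\<Sum>Y\<in>Pow X. if Y \<subseteq> {x. c x} then \<alpha> Y else 0)"
    unfolding sq_eval_def
  proof (intro sum.cong refl)
    fix Y assume "Y \<in> Pow X"
    then have "finite Y" using assms finite_subset by blast
    then have "(\<Prod>x\<in>Y. if c x then 1 else 0 :: real) = (if Y \<subseteq> {x. c x} then 1 else 0)"
      by (induction Y rule: finite_induct) auto
    then show "\<alpha> Y * (\<Prod>x\<in>Y. if c x then 1 else 0) = (if Y \<subseteq> {x. c x} then \<alpha> Y else 0)"
      by simp
  qed
  also have "\<dots> = (\<Sum>Y\<in>{Y\<in>Pow X. Y \<subseteq> {x. c x}}. \<alpha> Y)"
    using assms by (intro sum.inter_filter[symmetric]) simp
  also have "{Y\<in>Pow X. Y \<subseteq> {x. c x}} = Pow {x\<in>X. c x}"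
    by auto
  finally show ?thesis .
qed

lemma sum_Pow_insert:
  assumes "finite X" "x \<notin> X"
  shows "(\<Sum>Y\<in>Pow (insert x X). h Y) = (\<Sum>Y\<in>Pow X. h Y) + (\<Sum>Y\<in>Pow X. h (insert x Y))"
proof -
  have "inj_on (insert x) (Pow X)"
    using assms(2) unfolding inj_on_def by (metis PowD insert_ident subsetD)
  moreover have "Pow X \<inter> insert x ` Pow X = {}"
    using assms(2) by auto
  ultimately show ?thesis
    unfolding Pow_insert using assms(1) by (simp add: sum.union_disjoint sum.reindex)
qed

lemma sum_Pow_if_notin:
  assumes "finite X"
  shows "(\<Sum>Y\<in>Pow X. if v \<notin> Y then h Y else 0) = (\<Sum>Y\<in>Pow (X - {v}). h Y)"
proof -
  have "(\<Sum>Y\<in>Pow X. if v \<notin> Y then h Y else 0) = (\<Sum>Y\<in>{Y\<in>Pow X. v \<notin> Y}. h Y)"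
    using assms by (intro sum.inter_filter[symmetric]) simp
  also have "{Y\<in>Pow X. v \<notin> Y} = Pow (X - {v})"
    by auto
  finally show ?thesis .
qed

lemma in_alg_mono: "in_alg X \<alpha> \<Longrightarrow> X \<subseteq> Y \<Longrightarrow> in_alg Y \<alpha>"
  unfolding in_alg_def by blast

lemma in_alg_add: "in_alg X \<alpha> \<Longrightarrow> in_alg X \<beta> \<Longrightarrow> in_alg X (sq_add \<alpha> \<beta>)"
  unfolding in_alg_def sq_add_def by (metis add.right_neutral add_0)

lemma in_alg_mult:
  assumes "in_alg X \<alpha>" "in_alg X \<beta>"
  shows "in_alg X (sq_mult \<alpha> \<beta>)"
  unfolding in_alg_def
proof (intro allI impI)
  fix Y assume nonzero: "sq_mult \<alpha> \<beta> Y \<noteq> 0"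
  show "Y \<subseteq> X"
  proof (rule ccontr)
    assume "\<not> Y \<subseteq> X"
    then have "sq_mult \<alpha> \<beta> Y = 0"
      using assms unfolding sq_mult_def in_alg_def by (intro sum.neutral) auto
    with nonzero show False ..
  qed
qed

lemma sq_eval_add: "sq_eval X (sq_add \<alpha> \<beta>) c = sq_eval X \<alpha> c + sq_eval X \<beta> c"
  unfolding sq_eval_def sq_add_def by (simp add: sum.distrib ring_distribs)

lemma sq_eval_diff: "sq_eval X (\<lambda>Y. \<alpha> Y - \<beta> Y) c = sq_eval X \<alpha> c - sq_eval X \<beta> c"
  unfolding sq_eval_def by (simp add: sum_subtractf left_diff_distrib)

lemma sq_eval_mult:
  assumes "finite X"
  shows "sq_eval X (sq_mult \<alpha> \<beta>) c = sq_eval X \<alpha> c * sq_eval X \<beta> c"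
proof -
  define C where "C = {x\<in>X. c x}"
  have "finite C"
    using assms unfolding C_def by simp
  have fibre: "{p \<in> Pow C \<times> Pow C. fst p \<union> snd p = Y} = {(Y1, Y2). Y1 \<subseteq> Y \<and> Y2 \<subseteq> Y \<and> Y1 \<union> Y2 = Y}"
    if "Y \<in> Pow C" for Y
    using that by auto
  have "sq_eval X (sq_mult \<alpha> \<beta>) c
      = (\<Sum>Y\<in>Pow C. \<Sum>p\<in>{p \<in> Pow C \<times> Pow C. fst p \<union> snd p = Y}. \<alpha> (fst p) * \<beta> (snd p))"
    unfolding sq_eval_eq_sum[OF assms] C_def[symmetric] sq_mult_def
    by (intro sum.cong refl) (simp_all add: fibre case_prod_beta)
  also have "\<dots> = (\<Sum>p\<in>Pow C \<times> Pow C. \<alpha> (fst p) * \<beta> (snd p))"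
    using \<open>finite C\<close> by (intro sum.group) auto
  also have "\<dots> = sq_eval X \<alpha> c * sq_eval X \<beta> c"
    unfolding sq_eval_eq_sum[OF assms] C_def[symmetric] sum_product sum.cartesian_product
    by (simp add: split_def)
  finally show ?thesis .
qed

lemma sq_eval_subset:
  assumes "in_alg X \<alpha>" "X \<subseteq> Y" "finite Y"
  shows "sq_eval X \<alpha> c = sq_eval Y \<alpha> c"
  unfolding sq_eval_eq_sum[OF assms(3)] sq_eval_eq_sum[OF finite_subset[OF assms(2,3)]]
  using assms by (intro sum.mono_neutral_left) (auto simp: in_alg_def)

lemma sq_eval_eq_zero_imp_zero:
  assumes "finite X" "in_alg X \<alpha>" "\<And>c. sq_eval X \<alpha> c = 0"
  shows "\<alpha> = (\<lambda>_. 0)"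
proof
  fix Y
  show "\<alpha> Y = 0"
  proof (cases "Y \<subseteq> X")
    case True
    then have "finite Y"
      using assms(1) finite_subset by blast
    then show ?thesis
      using True
    proof (induction Y rule: finite_psubset_induct)
      case (psubset Y)
      have "0 = sq_eval X \<alpha> (\<lambda>x. x \<in> Y)"
        using assms(3) by simp
      also have "\<dots> = \<alpha> Y + (\<Sum>W\<in>Pow Y - {Y}. \<alpha> W)"
      proof -
        have "{x\<in>X. x \<in> Y} = Y"
          using psubset.prems by blast
        then show ?thesis
          using psubset.hyps by (simp add: sq_eval_eq_sum[OF assms(1)] sum.remove)
      qed
      also have "(\<Sum>W\<in>Pow Y - {Y}. \<alpha> W) = 0"
        using psubset by (intro sum.neutral) auto
      finally show ?case
        by simp
    qed
  next
    case False
    then show ?thesis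
      using assms(2) unfolding in_alg_def by blast
  qed
qed

(* alpha = F_v * sq_deriv v alpha + sq_free_part v alpha, where neither part involves F_v. *)
definition sq_free_part :: "'a \<Rightarrow> 'a sqpoly \<Rightarrow> 'a sqpoly" where
  "sq_free_part v \<alpha> = (\<lambda>W. if v \<notin> W then \<alpha> W else 0)"

definition sq_deriv :: "'a \<Rightarrow> 'a sqpoly \<Rightarrow> 'a sqpoly" where
  "sq_deriv v \<alpha> = (\<lambda>W. if v \<notin> W then \<alpha> (insert v W) else 0)"

lemma sq_subst_eq: "sq_subst \<alpha> v \<beta> = sq_add (sq_mult \<beta> (sq_deriv v \<alpha>)) (sq_free_part v \<alpha>)"
  unfolding sq_subst_def sq_deriv_def sq_free_part_def ..

lemma in_alg_sq_free_part: "in_alg X \<alpha> \<Longrightarrow> in_alg (X - {v}) (sq_free_part v \<alpha>)"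
  unfolding in_alg_def sq_free_part_def by auto

lemma in_alg_sq_deriv: "in_alg X \<alpha> \<Longrightarrow> in_alg (X - {v}) (sq_deriv v \<alpha>)"
  unfolding in_alg_def sq_deriv_def by auto

lemma sq_eval_fun_upd:
  assumes "finite X" "v \<in> X"
  shows "sq_eval X \<alpha> (c(v := b)) =
    sq_eval X (sq_free_part v \<alpha>) c + (if b then 1 else 0) * sq_eval X (sq_deriv v \<alpha>) c"
proof -
  define C where "C = {x \<in> X - {v}. c x}"
  have C: "finite C" "v \<notin> C" "{x\<in>X. c x} - {v} = C"
    using assms(1) unfolding C_def by auto
  have free: "sq_eval X (sq_free_part v \<alpha>) c = (\<Sum>Y\<in>Pow C. \<alpha> Y)"
    using assms(1) C(3) by (simp add: sq_eval_eq_sum sq_free_part_def sum_Pow_if_notin)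
  have deriv: "sq_eval X (sq_deriv v \<alpha>) c = (\<Sum>Y\<in>Pow C. \<alpha> (insert v Y))"
    using assms(1) C(3) by (simp add: sq_eval_eq_sum sq_deriv_def sum_Pow_if_notin)
  show ?thesis
  proof (cases b)
    case True
    then have "{x\<in>X. (c(v := b)) x} = insert v C"
      using assms(2) unfolding C_def by auto
    then show ?thesis
      unfolding free deriv sq_eval_eq_sum[OF assms(1), of \<alpha>] using C True by (simp add: sum_Pow_insert)
  next
    case False
    then have "{x\<in>X. (c(v := b)) x} = C"
      unfolding C_def by auto
    then show ?thesis
      unfolding free deriv sq_eval_eq_sum[OF assms(1), of \<alpha>] using False by simp
  qed
qed

definition depends_only_on :: "'a set \<Rightarrow> (('a \<Rightarrow> bool) \<Rightarrow> real) \<Rightarrow> bool" where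
  "depends_only_on X g \<longleftrightarrow> (\<forall>c d. (\<forall>x\<in>X. c x = d x) \<longrightarrow> g c = g d)"

lemma sq_representation_exists:
  assumes "finite X" "depends_only_on X g"
  shows "\<exists>\<alpha>. in_alg X \<alpha> \<and> (\<forall>c. g c = sq_eval X \<alpha> c)"
  using assms
proof (induction X arbitrary: g rule: finite_induct)
  case empty
  then have "g c = g (\<lambda>_. False)" for c
    unfolding depends_only_on_def by simp
  then have "in_alg {} (\<lambda>Y. if Y = {} then g (\<lambda>_. False) else 0) \<and>
      (\<forall>c. g c = sq_eval {} (\<lambda>Y. if Y = {} then g (\<lambda>_. False) else 0) c)"
    unfolding in_alg_def sq_eval_def by simp
  then show ?case
    by blast
next
  case (insert x X)
  have "depends_only_on X (\<lambda>c. g (c(x := b)))" for b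
    using insert.prems unfolding depends_only_on_def by simp
  then obtain \<alpha>1 \<alpha>0 where
    \<alpha>1: "in_alg X \<alpha>1" "\<And>c. g (c(x := True)) = sq_eval X \<alpha>1 c" and
    \<alpha>0: "in_alg X \<alpha>0" "\<And>c. g (c(x := False)) = sq_eval X \<alpha>0 c"
    using insert.IH by meson
  define \<alpha> where "\<alpha> Y = (if x \<in> Y then \<alpha>1 (Y - {x}) - \<alpha>0 (Y - {x}) else \<alpha>0 Y)" for Y
  have "\<alpha>1 Y = 0" "\<alpha>0 Y = 0" if "x \<in> Y" for Y
    using \<alpha>1(1) \<alpha>0(1) insert.hyps(2) that unfolding in_alg_def by blast+
  then have free: "sq_free_part x \<alpha> = \<alpha>0" and deriv: "sq_deriv x \<alpha> = (\<lambda>Y. \<alpha>1 Y - \<alpha>0 Y)"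
    unfolding sq_free_part_def sq_deriv_def \<alpha>_def by (auto simp: fun_eq_iff)
  have fin: "finite (insert x X)"
    using insert.hyps(1) by simp
  have "in_alg (insert x X) \<alpha>"
  proof (unfold in_alg_def, intro allI impI)
    fix Y assume "\<alpha> Y \<noteq> 0"
    then have "\<alpha>1 (Y - {x}) \<noteq> 0 \<or> \<alpha>0 (Y - {x}) \<noteq> 0 \<or> \<alpha>0 Y \<noteq> 0"
      unfolding \<alpha>_def by (auto split: if_splits)
    then show "Y \<subseteq> insert x X"
      using \<alpha>1(1) \<alpha>0(1) unfolding in_alg_def by blast
  qed
  moreover have "g c = sq_eval (insert x X) \<alpha> c" for c
  proof -
    have "sq_eval (insert x X) \<alpha> c = sq_eval (insert x X) \<alpha> (c(x := c x))"
      by simp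
    also have "\<dots> = sq_eval X \<alpha>0 c + (if c x then 1 else 0) * (sq_eval X \<alpha>1 c - sq_eval X \<alpha>0 c)"
      unfolding sq_eval_fun_upd[OF fin insertI1] free deriv sq_eval_diff
      using sq_eval_subset[OF \<alpha>1(1) subset_insertI fin] sq_eval_subset[OF \<alpha>0(1) subset_insertI fin]
      by simp
    also have "\<dots> = g c"
      using \<alpha>1(2)[of c] \<alpha>0(2)[of c] by (cases "c x") (simp_all add: fun_upd_idem)
    finally show ?thesis ..
  qed
  ultimately show ?case
    by blast
qed

lemma rep_eqI:
  assumes "finite X" "in_alg X \<alpha>" "\<And>c. g c = sq_eval X \<alpha> c"
  shows "rep X g = \<alpha>"
  unfolding rep_def
proof (rule the_equality)
  show "in_alg X \<alpha> \<and> (\<forall>c. g c = sq_eval X \<alpha> c)"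
    using assms(2,3) by simp
  fix \<beta> assume \<beta>: "in_alg X \<beta> \<and> (\<forall>c. g c = sq_eval X \<beta> c)"
  have "(\<lambda>Y. \<beta> Y - \<alpha> Y) = (\<lambda>_. 0)"
  proof (rule sq_eval_eq_zero_imp_zero[OF assms(1)])
    show "in_alg X (\<lambda>Y. \<beta> Y - \<alpha> Y)"
      using \<beta> assms(2) unfolding in_alg_def by (metis diff_self)
    show "sq_eval X (\<lambda>Y. \<beta> Y - \<alpha> Y) c = 0" for c
      using \<beta> assms(3) by (simp add: sq_eval_diff)
  qed
  then show "\<beta> = \<alpha>"
    by (simp add: fun_eq_iff)
qed

lemma in_alg_rep:
  assumes "finite X" "depends_only_on X g"
  shows "in_alg X (rep X g)" and "g c = sq_eval X (rep X g) c"
proof -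
  obtain \<alpha> where "in_alg X \<alpha>" "\<forall>c. g c = sq_eval X \<alpha> c"
    using sq_representation_exists[OF assms] by blast
  moreover from this have "rep X g = \<alpha>"
    using rep_eqI[OF assms(1)] by blast
  ultimately show "in_alg X (rep X g)" and "g c = sq_eval X (rep X g) c"
    by simp_all
qed

lemma in_alg_sq_subst:
  assumes "in_alg X \<alpha>" "in_alg Y \<beta>"
  shows "in_alg ((X - {v}) \<union> Y) (sq_subst \<alpha> v \<beta>)"
proof -
  have "X - {v} \<subseteq> (X - {v}) \<union> Y" "Y \<subseteq> (X - {v}) \<union> Y"
    by auto
  then show ?thesis
    unfolding sq_subst_eq
    by (intro in_alg_add in_alg_mult in_alg_mono[OF assms(2)]
        in_alg_mono[OF in_alg_sq_deriv[OF assms(1)]] in_alg_mono[OF in_alg_sq_free_part[OF assms(1)]])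
qed

lemma sq_eval_sq_subst:
  assumes "finite X" "v \<in> X"
  shows "sq_eval X (sq_subst \<alpha> v \<beta>) c =
    sq_eval X \<beta> c * sq_eval X \<alpha> (c(v := True)) + (1 - sq_eval X \<beta> c) * sq_eval X \<alpha> (c(v := False))"
  unfolding sq_subst_eq sq_eval_add sq_eval_mult[OF assms(1)] sq_eval_fun_upd[OF assms]
  by (simp add: algebra_simps)

lemma rep_sq_subst:
  assumes "finite X" "finite Y" "v \<in> X" "depends_only_on X g" "depends_only_on Y g'"
    and "\<And>c. h c = g' c * g (c(v := True)) + (1 - g' c) * g (c(v := False))"
  shows "rep ((X - {v}) \<union> Y) h = sq_subst (rep X g) v (rep Y g')"
proof -
  define \<alpha> \<beta> where "\<alpha> = rep X g" and "\<beta> = rep Y g'"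
  have fin: "finite (X \<union> Y)"
    using assms(1,2) by simp
  have \<alpha>: "in_alg X \<alpha>" "g c = sq_eval (X \<union> Y) \<alpha> c" for c
    using in_alg_rep[OF assms(1,4)] sq_eval_subset[OF _ _ fin] unfolding \<alpha>_def by auto
  have \<beta>: "in_alg Y \<beta>" "g' c = sq_eval (X \<union> Y) \<beta> c" for c
    using in_alg_rep[OF assms(2,5)] sq_eval_subset[OF _ _ fin] unfolding \<beta>_def by auto
  have subst: "in_alg ((X - {v}) \<union> Y) (sq_subst \<alpha> v \<beta>)"
    using in_alg_sq_subst[OF \<alpha>(1) \<beta>(1)] .
  show ?thesis
    unfolding \<alpha>_def[symmetric] \<beta>_def[symmetric]
  proof (rule rep_eqI[OF _ subst])
    show "finite ((X - {v}) \<union> Y)"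
      using fin by simp
    fix c
    have "h c = sq_eval (X \<union> Y) (sq_subst \<alpha> v \<beta>) c"
      using assms(3) by (simp add: assms(6) \<alpha>(2) \<beta>(2) sq_eval_sq_subst[OF fin])
    also have "\<dots> = sq_eval ((X - {v}) \<union> Y) (sq_subst \<alpha> v \<beta>) c"
      using fin subst by (intro sq_eval_subset[symmetric]) auto
    finally show "h c = sq_eval ((X - {v}) \<union> Y) (sq_subst \<alpha> v \<beta>) c" .
  qed
qed

section \<open>The structure function on finite DAGs\<close>

definition is_dag :: "'a pcft \<Rightarrow> bool" where
  "is_dag T \<longleftrightarrow> finite (nodes T) \<and> edges T \<subseteq> nodes T \<times> nodes T \<and> acyclic (edges T)"

lemma is_pcft_imp_is_dag: "is_pcft T \<Longrightarrow> is_dag T"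
  unfolding is_pcft_def is_dag_def by blast

lemma acyclic_relpow_less_card:
  assumes "finite N" "E \<subseteq> N \<times> N" "acyclic E" "u \<in> N" "(u, w) \<in> E ^^ k"
  shows "k < card N"
proof -
  have "E\<^sup>* `` N = N"
    using assms(2) by (intro Image_closed_trancl) blast
  then have reach: "E\<^sup>* `` {x} \<subseteq> N" if "x \<in> N" for x
    using that by (metis Image_mono empty_subsetI insert_subset order_refl)
  have "k < card (E\<^sup>* `` {u})"
    using assms(4,5)
  proof (induction k arbitrary: u)
    case 0
    then show ?case
      using finite_subset[OF reach assms(1)] card_0_eq by fastforce
  next
    case (Suc k u)
    obtain y where uy: "(u, y) \<in> E" and yw: "(y, w) \<in> E ^^ k"
      using relpow_Suc_D2[OF Suc.prems(2)] by blast
    have "y \<in> N"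
      using uy assms(2) by blast
    have "E\<^sup>* `` {y} \<subset> E\<^sup>* `` {u}"
    proof
      show "E\<^sup>* `` {y} \<subseteq> E\<^sup>* `` {u}"
        using uy by (auto intro: converse_rtrancl_into_rtrancl)
      have "(y, u) \<notin> E\<^sup>*"
        using uy assms(3) unfolding acyclic_def by (meson rtrancl_into_trancl2)
      then show "E\<^sup>* `` {y} \<noteq> E\<^sup>* `` {u}"
        by blast
    qed
    then have "card (E\<^sup>* `` {y}) < card (E\<^sup>* `` {u})"
      using finite_subset[OF reach[OF Suc.prems(1)] assms(1)] by (rule psubset_card_mono[rotated])
    then show ?case
      using Suc.IH[OF \<open>y \<in> N\<close> yw] by simp
  qed
  then show ?thesis
    using card_mono[OF assms(1) reach[OF assms(4)]] by simp
qed

definition sf_step :: "'a pcft \<Rightarrow> ('a \<Rightarrow> bool) \<Rightarrow> ('a \<Rightarrow> bool) \<Rightarrow> ('a \<Rightarrow> bool) \<Rightarrow> 'a \<Rightarrow> bool" where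
  "sf_step T f c h u =
     (case lab T u of
        GBE \<Rightarrow> f u
      | GCBE \<Rightarrow> c u
      | GOr \<Rightarrow> (\<exists>w. (u, w) \<in> edges T \<and> h w)
      | GAnd \<Rightarrow> (\<forall>w. (u, w) \<in> edges T \<longrightarrow> h w))"

lemma sf_fuel_Suc: "sf_fuel T (Suc n) f c u = sf_step T f c (\<lambda>w. sf_fuel T n f c w) u"
  unfolding sf_step_def by simp

lemma sf_step_cong:
  "(\<And>w. (u, w) \<in> edges T \<Longrightarrow> h w = h' w) \<Longrightarrow> sf_step T f c h u = sf_step T f c h' u"
  unfolding sf_step_def by (auto split: gate.split)

lemma sf_fuel_stable:
  assumes "\<And>w. (u, w) \<notin> edges T ^^ k" "k \<le> n" "k \<le> m"
  shows "sf_fuel T n f c u = sf_fuel T m f c u"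
  using assms
proof (induction k arbitrary: u n m)
  case (Suc k)
  obtain n' m' where n: "n = Suc n'" "k \<le> n'" and m: "m = Suc m'" "k \<le> m'"
    using Suc.prems(2,3) by (metis Suc_le_D Suc_le_mono)
  have "sf_fuel T n' f c w = sf_fuel T m' f c w" if "(u, w) \<in> edges T" for w
    using Suc.IH[of w n' m'] Suc.prems(1) relpow_Suc_I2[OF that] n(2) m(2) by blast
  then have "sf_step T f c (\<lambda>w. sf_fuel T n' f c w) u = sf_step T f c (\<lambda>w. sf_fuel T m' f c w) u"
    by (rule sf_step_cong)
  then show ?case
    unfolding n(1) m(1) sf_fuel_Suc .
qed auto

lemma S_unfold:
  assumes "is_dag T" "u \<in> nodes T"
  shows "S T u f c = sf_step T f c (\<lambda>w. S T w f c) u"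
proof -
  have "(u, w) \<notin> edges T ^^ card (nodes T)" for w
    using assms acyclic_relpow_less_card[of "nodes T" "edges T" u w] unfolding is_dag_def by blast
  then have "S T u f c = sf_fuel T (Suc (card (nodes T))) f c u"
    unfolding S_def by (rule sf_fuel_stable) auto
  then show ?thesis
    unfolding sf_fuel_Suc S_def .
qed

lemma S_unique:
  assumes "is_dag T" "\<And>u. u \<in> nodes T \<Longrightarrow> h u = sf_step T f c h u" "u \<in> nodes T"
  shows "h u = S T u f c"
proof -
  have "finite (edges T)" "acyclic (edges T)"
    using assms(1) finite_subset unfolding is_dag_def by auto
  then have "wf ((edges T)\<inverse>)"
    by (rule finite_acyclic_wf_converse)
  then show ?thesis
    using assms(3)
  proof (induction u rule: wf_induct_rule)
    case (less u)
    have "h w = S T w f c" if "(u, w) \<in> edges T" for w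
      using less.IH that assms(1) unfolding is_dag_def by blast
    then have "sf_step T f c h u = sf_step T f c (\<lambda>w. S T w f c) u"
      by (rule sf_step_cong)
    then show ?case
      using assms(2)[OF less.prems] S_unfold[OF assms(1) less.prems] by simp
  qed
qed

lemma S_cong:
  assumes "is_dag T" "u \<in> nodes T" "\<forall>x\<in>BE T. f x = g x" "\<forall>x\<in>CBE T. c x = d x"
  shows "S T u f c = S T u g d"
proof -
  have "S T u g d = S T u f c"
  proof (rule S_unique[OF assms(1) _ assms(2)])
    fix u assume "u \<in> nodes T"
    then show "S T u g d = sf_step T f c (\<lambda>w. S T w g d) u"
      using assms(3,4) S_unfold[OF assms(1)]
      by (auto simp: sf_step_def BE_def CBE_def split: gate.split)
  qed
  then show ?thesis ..
qed

lemma U_depends_only_on_CBE: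
  assumes "is_pcft T"
  shows "depends_only_on (CBE T) (U T)"
  unfolding depends_only_on_def
proof (intro allI impI)
  fix c d :: "'a \<Rightarrow> bool"
  assume "\<forall>x\<in>CBE T. c x = d x"
  moreover have "root T \<in> nodes T"
    using assms unfolding is_pcft_def by blast
  ultimately have "S T (root T) f c = S T (root T) f d" for f
    by (intro S_cong is_pcft_imp_is_dag[OF assms]) auto
  then show "U T c = U T d"
    unfolding U_def by simp
qed

definition fail_weight :: "('a \<Rightarrow> real) \<Rightarrow> 'a set \<Rightarrow> 'a set \<Rightarrow> real" where
  "fail_weight p B A = (\<Prod>b\<in>A. p b) * (\<Prod>b\<in>B - A. 1 - p b)"

lemma U_eq_sum_fail_weight:
  "U T c = (\<Sum>A\<in>Pow (BE T). fail_weight (prob T) (BE T) A * of_bool (S T (root T) (\<lambda>b. b \<in> A) c))"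
  unfolding U_def fail_weight_def of_bool_def ..

lemma sum_fail_weight: "finite B \<Longrightarrow> (\<Sum>A\<in>Pow B. fail_weight p B A) = 1"
  using prod_add[of B p "\<lambda>b. 1 - p b"] unfolding fail_weight_def by simp

lemma fail_weight_cong:
  assumes "\<And>b. b \<in> B \<Longrightarrow> p b = q b" "A \<subseteq> B"
  shows "fail_weight p B A = fail_weight q B A"
proof -
  have "(\<Prod>b\<in>A. p b) = (\<Prod>b\<in>A. q b)" "(\<Prod>b\<in>B - A. 1 - p b) = (\<Prod>b\<in>B - A. 1 - q b)"
    using assms by (auto intro!: prod.cong)
  then show ?thesis
    unfolding fail_weight_def by simp
qed

lemma fail_weight_Un:
  assumes "finite B1" "finite B2" "B1 \<inter> B2 = {}" "A1 \<subseteq> B1" "A2 \<subseteq> B2"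
  shows "fail_weight p (B1 \<union> B2) (A1 \<union> A2) = fail_weight p B1 A1 * fail_weight p B2 A2"
proof -
  have "(\<Prod>b\<in>A1 \<union> A2. p b) = (\<Prod>b\<in>A1. p b) * (\<Prod>b\<in>A2. p b)"
    using assms by (intro prod.union_disjoint) (auto intro: finite_subset)
  moreover have "(B1 \<union> B2) - (A1 \<union> A2) = (B1 - A1) \<union> (B2 - A2)"
    using assms(3-5) by blast
  moreover have "(\<Prod>b\<in>(B1 - A1) \<union> (B2 - A2). 1 - p b) = (\<Prod>b\<in>B1 - A1. 1 - p b) * (\<Prod>b\<in>B2 - A2. 1 - p b)"
    using assms by (intro prod.union_disjoint) auto
  ultimately show ?thesis
    unfolding fail_weight_def by (simp only: ac_simps)
qed

lemma sum_Pow_Un: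
  assumes "B1 \<inter> B2 = {}"
  shows "(\<Sum>A\<in>Pow (B1 \<union> B2). h A) = (\<Sum>A1\<in>Pow B1. \<Sum>A2\<in>Pow B2. h (A1 \<union> A2))"
proof -
  have "(\<Sum>A\<in>Pow (B1 \<union> B2). h A) = (\<Sum>(A1, A2)\<in>Pow B1 \<times> Pow B2. h (A1 \<union> A2))"
    by (rule sum.reindex_bij_witness[where i = "\<lambda>(A1, A2). A1 \<union> A2" and j = "\<lambda>A. (A \<inter> B1, A \<inter> B2)"])
      (use assms in \<open>auto simp: Int_absorb2 simp flip: Int_Un_distrib\<close>)
  then show ?thesis
    by (simp add: sum.cartesian_product)
qed

section \<open>Quasimodular composition\<close>

locale quasimodular_composition =
  fixes T T' :: "'a pcft" and v :: 'a
  assumes pcft: "is_pcft T" and pcft': "is_pcft T'"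
    and agree: "\<forall>u\<in>nodes T \<inter> nodes T'. lab T u = lab T' u \<and>
           (\<forall>w. (u, w) \<in> edges T \<longleftrightarrow> (u, w) \<in> edges T') \<and>
           (lab T u = GBE \<longrightarrow> prob T u = prob T' u)"
    and v_CBE: "v \<in> CBE T" and v_notin: "v \<notin> nodes T'"
    and BE_disjoint: "BE T \<inter> BE T' = {}"
begin

abbreviation T'' :: "'a pcft" where
  "T'' \<equiv> compose T v T'"

abbreviation redirect :: "'a \<Rightarrow> 'a" where
  "redirect u \<equiv> if u = v then root T' else u"

lemma dag: "is_dag T" "is_dag T'"
  using pcft pcft' by (simp_all add: is_pcft_imp_is_dag)

lemma edges_subset: "edges T \<subseteq> nodes T \<times> nodes T" "edges T' \<subseteq> nodes T' \<times> nodes T'"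
  using dag unfolding is_dag_def by simp_all

lemma root_in_nodes: "root T \<in> nodes T" "root T' \<in> nodes T'"
  using pcft pcft' unfolding is_pcft_def by simp_all

lemma v_leaf: "v \<in> nodes T" "lab T v = GCBE" "(v, w) \<notin> edges T"
  using v_CBE pcft unfolding CBE_def is_pcft_def by auto

lemma nodes_compose: "nodes T'' = (nodes T - {v}) \<union> nodes T'"
  and edges_compose: "edges T'' = {(a, redirect b) | a b. (a, b) \<in> edges T} \<union> edges T'"
  and lab_compose: "lab T'' u = (if u \<in> nodes T' then lab T' u else lab T u)"
  and prob_compose: "prob T'' u = (if u \<in> nodes T' then prob T' u else prob T u)"
  and root_compose: "root T'' = redirect (root T)"
  unfolding compose_def by simp_all

lemma lab_compose_T: "u \<in> nodes T \<Longrightarrow> lab T'' u = lab T u"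
  using agree unfolding lab_compose by auto

lemma edges_compose_T':
  assumes "x \<in> nodes T'"
  shows "(x, w) \<in> edges T'' \<longleftrightarrow> (x, w) \<in> edges T'"
proof
  assume "(x, w) \<in> edges T''"
  moreover have "(x, b) \<in> edges T \<Longrightarrow> (x, b) \<in> edges T' \<and> b \<noteq> v" for b
    using agree assms edges_subset v_notin by blast
  ultimately show "(x, w) \<in> edges T'"
    unfolding edges_compose by auto
qed (simp add: edges_compose)

lemma edges_compose_T:
  assumes "x \<in> nodes T"
  shows "(x, w) \<in> edges T'' \<longleftrightarrow> (\<exists>b. (x, b) \<in> edges T \<and> w = redirect b)"
proof
  assume "(x, w) \<in> edges T''"
  moreover have "(x, w) \<in> edges T \<and> w \<noteq> v" if "(x, w) \<in> edges T'"
    using that agree assms edges_subset v_notin by blast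
  ultimately show "\<exists>b. (x, b) \<in> edges T \<and> w = redirect b"
    unfolding edges_compose by auto
qed (auto simp add: edges_compose)

lemma edges_compose_outside: "(x, y) \<in> edges T'' \<Longrightarrow> y \<notin> nodes T' \<Longrightarrow> (x, y) \<in> edges T"
  using edges_subset(2) root_in_nodes(2) unfolding edges_compose by (auto split: if_splits)

lemma trancl_compose_T':
  "(x, y) \<in> (edges T'')\<^sup>+ \<Longrightarrow> x \<in> nodes T' \<Longrightarrow> (x, y) \<in> (edges T')\<^sup>+"
proof (induction rule: trancl_induct)
  case (base y)
  then show ?case
    using edges_compose_T' by blast
next
  case (step y z)
  then have "y \<in> nodes T'"
    using edges_subset(2) by (auto dest: tranclD2)
  then show ?case
    using step edges_compose_T' by (meson trancl_into_trancl)
qed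

lemma trancl_compose_outside:
  "(x, y) \<in> (edges T'')\<^sup>+ \<Longrightarrow> y \<notin> nodes T' \<Longrightarrow> (x, y) \<in> (edges T)\<^sup>+"
proof (induction rule: trancl_induct)
  case (base y)
  then show ?case
    using edges_compose_outside by blast
next
  case (step y z)
  have "y \<notin> nodes T'"
    using step edges_compose_T' edges_subset(2) by blast
  then show ?case
    using step edges_compose_outside by (meson trancl_into_trancl)
qed

lemma is_dag_compose: "is_dag T''"
  unfolding is_dag_def
proof (intro conjI)
  show "finite (nodes T'')"
    using dag unfolding is_dag_def nodes_compose by simp
  have "(a, redirect b) \<in> nodes T'' \<times> nodes T''" if "(a, b) \<in> edges T" for a b
    using that edges_subset(1) v_leaf(3) root_in_nodes(2) unfolding nodes_compose by auto
  then show "edges T'' \<subseteq> nodes T'' \<times> nodes T''"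
    using edges_subset(2) unfolding edges_compose nodes_compose by blast
  show "acyclic (edges T'')"
    unfolding acyclic_def
  proof (intro allI notI)
    fix x assume "(x, x) \<in> (edges T'')\<^sup>+"
    then show False
      using trancl_compose_T' trancl_compose_outside dag
      unfolding is_dag_def acyclic_def by blast
  qed
qed

lemma S_compose_T':
  assumes "u \<in> nodes T'"
  shows "S T'' u f c = S T' u f c"
proof (rule S_unique[OF dag(2) _ assms])
  fix u assume u: "u \<in> nodes T'"
  then have "u \<in> nodes T''"
    unfolding nodes_compose by blast
  then show "S T'' u f c = sf_step T' f c (\<lambda>w. S T'' w f c) u"
    using u S_unfold[OF is_dag_compose] edges_compose_T'[OF u]
    by (auto simp: sf_step_def lab_compose split: gate.split)
qed

lemma S_compose:
  assumes "u \<in> nodes T"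
  shows "S T'' (redirect u) f c = S T u f (c(v := S T' (root T') f c))"
proof (rule S_unique[OF dag(1) _ assms])
  fix u assume u: "u \<in> nodes T"
  show "S T'' (redirect u) f c = sf_step T f (c(v := S T' (root T') f c)) (\<lambda>w. S T'' (redirect w) f c) u"
  proof (cases "u = v")
    case True
    then show ?thesis
      using S_compose_T'[OF root_in_nodes(2)] v_leaf(2) by (simp add: sf_step_def)
  next
    case False
    then have "u \<in> nodes T''"
      using u unfolding nodes_compose by blast
    then have "S T'' u f c = sf_step T'' f c (\<lambda>w. S T'' w f c) u"
      by (rule S_unfold[OF is_dag_compose])
    then show ?thesis
      using False edges_compose_T[OF u] lab_compose_T[OF u]
      by (auto simp: sf_step_def split: gate.split)
  qed
qed

lemma BE_notin_nodes': "x \<in> BE T \<Longrightarrow> x \<notin> nodes T'"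
  using agree BE_disjoint unfolding BE_def by auto

lemma BE_compose: "BE T'' = BE T \<union> BE T'"
  using agree v_leaf(2) unfolding BE_def nodes_compose lab_compose by auto

lemma CBE_compose: "CBE T'' = (CBE T - {v}) \<union> CBE T'"
  using agree v_notin unfolding CBE_def nodes_compose lab_compose by auto

lemma S_root_compose:
  assumes "A1 \<subseteq> BE T" "A2 \<subseteq> BE T'"
  shows "S T'' (root T'') (\<lambda>b. b \<in> A1 \<union> A2) c =
    S T (root T) (\<lambda>b. b \<in> A1) (c(v := S T' (root T') (\<lambda>b. b \<in> A2) c))"
proof -
  have "S T' (root T') (\<lambda>b. b \<in> A1 \<union> A2) c = S T' (root T') (\<lambda>b. b \<in> A2) c"
    using assms(1) BE_disjoint by (intro S_cong[OF dag(2) root_in_nodes(2)]) auto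
  moreover have "S T (root T) (\<lambda>b. b \<in> A1 \<union> A2) c' = S T (root T) (\<lambda>b. b \<in> A1) c'" for c'
    using assms(2) BE_disjoint by (intro S_cong[OF dag(1) root_in_nodes(1)]) auto
  ultimately show ?thesis
    unfolding root_compose S_compose[OF root_in_nodes(1)] by simp
qed

lemma U_compose: "U T'' c = U T' c * U T (c(v := True)) + (1 - U T' c) * U T (c(v := False))"
proof -
  have fin: "finite (BE T)" "finite (BE T')"
    using dag unfolding is_dag_def BE_def by simp_all
  define w where "w A = fail_weight (prob T) (BE T) A" for A
  define w' where "w' A = fail_weight (prob T') (BE T') A" for A
  define s :: "bool \<Rightarrow> 'a set \<Rightarrow> real" where "s b A = of_bool (S T (root T) (\<lambda>x. x \<in> A) (c(v := b)))" for b A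
  define s' where "s' A = S T' (root T') (\<lambda>x. x \<in> A) c" for A
  have weight: "fail_weight (prob T'') (BE T \<union> BE T') (A1 \<union> A2) = w A1 * w' A2"
    if "A1 \<subseteq> BE T" "A2 \<subseteq> BE T'" for A1 A2
  proof -
    have "fail_weight (prob T'') (BE T) A1 = w A1"
      unfolding w_def using that(1) BE_notin_nodes' by (intro fail_weight_cong) (auto simp: prob_compose)
    moreover have "fail_weight (prob T'') (BE T') A2 = w' A2"
      unfolding w'_def using that(2) by (intro fail_weight_cong) (auto simp: prob_compose BE_def)
    ultimately show ?thesis
      using fail_weight_Un[OF fin BE_disjoint that] by simp
  qed
  have "U T'' c = (\<Sum>A1\<in>Pow (BE T). \<Sum>A2\<in>Pow (BE T'). w A1 * w' A2 * s (s' A2) A1)"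
    unfolding U_eq_sum_fail_weight[of T''] BE_compose sum_Pow_Un[OF BE_disjoint]
    by (intro sum.cong refl) (simp add: weight S_root_compose s_def s'_def del: Un_iff)
  \<comment> \<open>condition on whether the root of T' fails\<close>
  also have "\<dots> = (\<Sum>A1\<in>Pow (BE T). \<Sum>A2\<in>Pow (BE T').
      w A1 * s True A1 * (w' A2 * of_bool (s' A2)) + w A1 * s False A1 * (w' A2 * (1 - of_bool (s' A2))))"
    by (intro sum.cong refl) simp
  also have "\<dots> = (\<Sum>A1\<in>Pow (BE T). w A1 * s True A1) * (\<Sum>A2\<in>Pow (BE T'). w' A2 * of_bool (s' A2))
      + (\<Sum>A1\<in>Pow (BE T). w A1 * s False A1) * (\<Sum>A2\<in>Pow (BE T'). w' A2 * (1 - of_bool (s' A2)))"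
    by (simp add: sum.distrib sum_product)
  also have "(\<Sum>A2\<in>Pow (BE T'). w' A2 * (1 - of_bool (s' A2))) = 1 - U T' c"
    using sum_fail_weight[OF fin(2)]
    by (simp add: U_eq_sum_fail_weight w'_def s'_def right_diff_distrib sum_subtractf)
  finally show ?thesis
    by (simp add: U_eq_sum_fail_weight w_def w'_def s_def s'_def mult.commute)
qed

end

theorem theorem26:
  fixes T T' :: "'a pcft" and v :: 'a
  assumes "is_pcft T" and "is_pcft T'"
    and "\<forall>u\<in>nodes T \<inter> nodes T'. lab T u = lab T' u \<and>
           (\<forall>w. (u, w) \<in> edges T \<longleftrightarrow> (u, w) \<in> edges T') \<and>
           (lab T u = GBE \<longrightarrow> prob T u = prob T' u)"
    and "v \<in> CBE T" and "v \<notin> nodes T'"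
    and "BE T \<inter> BE T' = {}"
  shows "CBE (compose T v T') = (CBE T - {v}) \<union> CBE T' \<and>
         rep (CBE (compose T v T')) (U (compose T v T')) =
           sq_subst (rep (CBE T) (U T)) v (rep (CBE T') (U T'))"
proof -
  interpret quasimodular_composition T T' v
    using assms by unfold_locales
  have "finite (CBE T)" "finite (CBE T')"
    using dag unfolding is_dag_def CBE_def by simp_all
  then show ?thesis
    unfolding CBE_compose
    using rep_sq_subst[OF _ _ v_CBE U_depends_only_on_CBE[OF pcft] U_depends_only_on_CBE[OF pcft'] U_compose]
    by simp
qed

end
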